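(* Consider the faulty-starter delivery problem described in the context, with finisher starting position $(x,y)$, $y\ge0$, and assume $(x,y)\notin D(1,1)$, i.e. $\sqrt{(x-1)^2+y^2}\ge 1$. Let $z_1=\sqrt{(x-1)^2+y^2}$ and $$t_1=\begin{cases}1-\dfrac{3y}{4} & \text{if } x=1,\\[2mm] \dfrac{x^2+y^2+z_1(1-x)-1-z_1\sqrt{x(x+z_1-2)+y^2-z_1+1}}{2(x-1)} & \text{otherwise.}\end{cases}$$ Then the competitive ratio of $\mathcal{A}_1$ equals $\mathrm{CR}_{\mathcal{A}_1}(\max\{t_1,0\})$, where $\mathrm{CR}_{\mathcal{A}_1}(t)=\dfrac{\sqrt{(x-1)^2+y^2}+2(1-t)}{\max\{1,\sqrt{(x-t)^2+y^2}+1-t\}}$.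
   Context: Setting. In the plane let $S=(0,0)$ and $T=(1,0)$. A "starter" drone carrying a package starts at $S$ at time $0$ and moves at unit speed along $\overline{ST}$ towards $T$. At an unknown time $t\in[0,1]$ it fails and stays forever at $(t,0)$ with the package. A "finisher" drone starts at time $0$ at $P=(x,y)$ with $y\ge0$, moves at unit speed and can stop and turn instantaneously. The package can be handed over only when the drones are co-located; it is delivered at the first time the finisher, carrying the package, is at $T$. An online algorithm $\mathcal{A}$ specifies the finisher's trajectory using only $(x,y)$; $A(t)$ is its delivery time for fail time $t$. $\mathrm{Opt}(t)=\max\{1,\sqrt{(x-t)^2+y^2}+1-t\}$ is the optimal offline delivery time. $\mathrm{CR}_{\mathcal{A}}(t)=A(t)/\mathrm{Opt}(t)$ and $\mathrm{CR}_{\mathcal{A}}=\sup_{0\le t\le1}\mathrm{CR}_{\mathcal{A}}(t)$. $D(c,r)$ denotes the open disk of radius $r$ centered at $(c,0)$. Algorithm $\mathcal{A}_1$: the finisher goes straight to $T$, then moves along the segment towards $S$ until it finds the package, then returns to $T$; its delivery time is $A_1(t)=\sqrt{(x-1)^2+y^2}+2(1-t)$. *)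

theory Defs
  imports "HOL-Analysis.Analysis"
begin

text \<open>Optimal offline delivery time for fail time t, finisher start (x,y).\<close>
definition Opt :: "real \<Rightarrow> real \<Rightarrow> real \<Rightarrow> real" where
  "Opt x y t = max 1 (sqrt ((x - t)^2 + y^2) + 1 - t)"

definition A1 :: "real \<Rightarrow> real \<Rightarrow> real \<Rightarrow> real" where
  "A1 x y t = sqrt ((x - 1)^2 + y^2) + 2 * (1 - t)"

definition CR_A1_at :: "real \<Rightarrow> real \<Rightarrow> real \<Rightarrow> real" where
  "CR_A1_at x y t = A1 x y t / Opt x y t"

definition CR_A1 :: "real \<Rightarrow> real \<Rightarrow> real" where
  "CR_A1 x y = (SUP t\<in>{0..1}. CR_A1_at x y t)"

definition t1 :: "real \<Rightarrow> real \<Rightarrow> real" where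
  "t1 x y = (let z1 = sqrt ((x - 1)^2 + y^2) in
     if x = 1 then 1 - 3 * y / 4
     else (x^2 + y^2 + z1 * (1 - x) - 1 - z1 * sqrt (x * (x + z1 - 2) + y^2 - z1 + 1))
          / (2 * (x - 1)))"

end

theory Submission
  imports Defs
begin

(* Outside D(1,1) the triangle inequality gives Opt(t) = d(t) + 1 - t, where d(t) is the
   distance from (x,y) to (t,0). Because d is convex, its tangent line at m bounds it from
   below, and this turns the sign of the derivative of CR_A1_at at m into a global statement:
   if the descent term D(m) satisfies D(m) (t - m) >= 0 then CR_A1_at t <= CR_A1_at m.
   The point t1 is an explicit root of D with t1 <= 1. When t1 <= 0, concavity of D together
   with D(1) >= 0 gives D(0) >= 0. So m = max t1 0 maximises CR_A1_at on [0,1]. *)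

lemma sqrt_sum_squares_eq_dist:
  fixes x y t :: real
  shows "sqrt ((x - t)^2 + y^2) = dist (x, y) (t, 0)"
  by (simp add: dist_Pair_Pair dist_real_def)

lemma sqrt_sum_squares_triangle:
  fixes x y t :: real
  assumes "t \<le> 1"
  shows "sqrt ((x - 1)^2 + y^2) \<le> sqrt ((x - t)^2 + y^2) + (1 - t)"
  using dist_triangle[of "(x, y)" "(1, 0)" "(t, 0)"] assms
  by (simp add: dist_Pair_Pair dist_real_def)

lemma sqrt_sum_squares_mult_ge:
  fixes p q y :: real
  shows "p * q + y^2 \<le> sqrt (p^2 + y^2) * sqrt (q^2 + y^2)"
  using norm_cauchy_schwarz[of "(p, y)" "(q, y)"] by (simp add: norm_Pair power2_eq_square)

lemma convex_on_sqrt_sum_squares: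
  fixes x y :: real
  shows "convex_on UNIV (\<lambda>m. sqrt ((x - m)^2 + y^2))"
proof (rule convex_onI)
  fix u p q :: real
  assume "0 < u" "u < 1"
  then have "dist (x, y) ((1 - u) *\<^sub>R (p, 0) + u *\<^sub>R (q, 0))
      \<le> (1 - u) * dist (x, y) (p, 0) + u * dist (x, y) (q, 0)"
    using convex_onD[OF convex_on_dist[OF convex_UNIV, of "(x, y)"], of u "(p, 0)" "(q, 0)"] by simp
  then show "sqrt ((x - ((1 - u) *\<^sub>R p + u *\<^sub>R q))^2 + y^2)
      \<le> (1 - u) * sqrt ((x - p)^2 + y^2) + u * sqrt ((x - q)^2 + y^2)"
    by (simp add: sqrt_sum_squares_eq_dist)
qed simp

lemma sqrt_diff_divide_nonneg:
  fixes R c a k :: real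
  assumes "R \<ge> 0" "R^2 = c^2 + a * k" "k \<ge> 0" "a < 0 \<Longrightarrow> c \<ge> 0"
  shows "(R - c) / a \<ge> 0"
proof (cases a "0::real" rule: linorder_cases)
  case less
  then have "R^2 \<le> c^2" using assms(2,3) by (simp add: mult_nonpos_nonneg)
  then have "R \<le> c" using assms(4)[OF less] by (rule power2_le_imp_le)
  then show ?thesis using less by (simp add: divide_nonpos_neg)
next
  case greater
  then have "c^2 \<le> R^2" using assms(2,3) by simp
  then have "\<bar>c\<bar> \<le> R" using assms(1) by (metis abs_le_square_iff abs_of_nonneg)
  then show ?thesis using greater by simp
qed simp

(* With a = x - 1, the value w below is x - t1 x y. *)
lemma explicit_root_sqrt_equation:
  fixes a y :: real
  assumes "a \<noteq> 0"
  defines "z \<equiv> sqrt (a^2 + y^2)"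
  defines "R \<equiv> sqrt (z * (z + a))"
  defines "w \<equiv> ((z + a) * (2 * a - z) + z * R) / (2 * a)"
  shows "a \<le> w" and "z * sqrt (w^2 + y^2) = 2 * y^2 + (2 * a - z) * w"
proof -
  have z2: "z^2 = a^2 + y^2" unfolding z_def by simp
  have za: "\<bar>a\<bar> \<le> z" unfolding z_def by (simp add: real_le_rsqrt)
  have R0: "R \<ge> 0" and R2: "R^2 = z * (z + a)" using za unfolding R_def by auto
  have "R^2 = (z - a)^2 + a * (3 * z - a)"
    unfolding R2 by (simp add: power2_eq_square algebra_simps)
  then have "(R - (z - a)) / a \<ge> 0"
    using za by (intro sqrt_diff_divide_nonneg[OF R0]) auto
  then have "0 \<le> z * ((R - (z - a)) / a) / 2"
    using za by (metis abs_ge_zero divide_nonneg_pos mult_nonneg_nonneg order_trans zero_less_numeral)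
  also have "\<dots> = w - a"
    unfolding w_def using assms(1) by (simp add: field_simps power2_eq_square)
  finally show "a \<le> w" by simp
  define D where "D = R * ((R - (z - 2 * a)) / a) / 2"
  have "R^2 = (z - 2 * a)^2 + a * (5 * z - 4 * a)"
    unfolding R2 by (simp add: power2_eq_square algebra_simps)
  then have "(R - (z - 2 * a)) / a \<ge> 0"
    using za by (intro sqrt_diff_divide_nonneg[OF R0]) auto
  then have D0: "D \<ge> 0"
    unfolding D_def using R0 by (metis divide_nonneg_pos mult_nonneg_nonneg zero_less_numeral)
  have "(R * (R + 2 * a - z))^2 = ((z + a) * (2 * a - z) + z * R)^2 + (2 * a)^2 * y^2"
    using R2 z2 by algebra
  then have "D^2 = w^2 + y^2"
    unfolding D_def w_def using assms(1) by (simp add: field_simps power2_eq_square)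
  then have sqrt_eq: "sqrt (w^2 + y^2) = D" using D0 by (metis real_sqrt_abs abs_of_nonneg)
  have "z * (R * (R + 2 * a - z)) = 2 * a * (2 * y^2) + (2 * a - z) * ((z + a) * (2 * a - z) + z * R)"
    using R2 z2 by algebra
  then have "z * D = 2 * y^2 + (2 * a - z) * w"
    unfolding D_def w_def using assms(1) by (simp add: field_simps)
  then show "z * sqrt (w^2 + y^2) = 2 * y^2 + (2 * a - z) * w"
    unfolding sqrt_eq .
qed

lemma Opt_eq_far_from_T:
  fixes x y t :: real
  assumes "sqrt ((x - 1)^2 + y^2) \<ge> 1" "t \<le> 1"
  shows "Opt x y t = sqrt ((x - t)^2 + y^2) + 1 - t"
  using sqrt_sum_squares_triangle[OF assms(2), of x y] assms(1) unfolding Opt_def by linarith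

(* Up to the positive factor sqrt ((x - m)^2 + y^2) * (Opt x y m)^2, this is minus the
   derivative of CR_A1_at x y at m, when Opt x y m is given by the second branch of its max. *)
definition CR_A1_descent :: "real \<Rightarrow> real \<Rightarrow> real \<Rightarrow> real" where
  "CR_A1_descent x y m = 2 * y^2 + (2 * (x - 1) - sqrt ((x - 1)^2 + y^2)) * (x - m)
     - sqrt ((x - 1)^2 + y^2) * sqrt ((x - m)^2 + y^2)"

lemma concave_on_CR_A1_descent: "concave_on UNIV (CR_A1_descent x y)"
  unfolding concave_on_def
proof (rule convex_onI)
  fix u p q :: real
  assume "0 < u" "u < 1"
  define z where "z = sqrt ((x - 1)^2 + y^2)"
  have "z * sqrt ((x - ((1 - u) *\<^sub>R p + u *\<^sub>R q))^2 + y^2)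
      \<le> z * ((1 - u) * sqrt ((x - p)^2 + y^2) + u * sqrt ((x - q)^2 + y^2))"
    using convex_onD[OF convex_on_sqrt_sum_squares, of u p q x y] \<open>0 < u\<close> \<open>u < 1\<close>
    unfolding z_def by (intro mult_left_mono) auto
  then show "- CR_A1_descent x y ((1 - u) *\<^sub>R p + u *\<^sub>R q)
      \<le> (1 - u) * - CR_A1_descent x y p + u * - CR_A1_descent x y q"
    unfolding CR_A1_descent_def z_def[symmetric] by (simp add: algebra_simps)
qed simp

lemma CR_A1_descent_1_nonneg: "CR_A1_descent x y 1 \<ge> 0"
proof -
  define z where "z = sqrt ((x - 1)^2 + y^2)"
  have "\<bar>x - 1\<bar> \<le> z" unfolding z_def by (simp add: real_le_rsqrt)
  moreover have "z^2 = (x - 1)^2 + y^2" unfolding z_def by simp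
  then have "CR_A1_descent x y 1 = z * (z - (x - 1))"
    unfolding CR_A1_descent_def z_def[symmetric] by (simp add: power2_eq_square algebra_simps)
  ultimately show ?thesis by simp
qed

lemma CR_A1_at_le_of_descent:
  fixes x y m t :: real
  assumes far: "sqrt ((x - 1)^2 + y^2) \<ge> 1" and "m \<le> 1" "t \<le> 1"
    and descent: "CR_A1_descent x y m * (t - m) \<ge> 0"
  shows "CR_A1_at x y t \<le> CR_A1_at x y m"
proof -
  define z d e where "z = sqrt ((x - 1)^2 + y^2)"
    and "d = sqrt ((x - t)^2 + y^2)" and "e = sqrt ((x - m)^2 + y^2)"
  have "(z + 2 * (1 - t)) * (e + 1 - m) \<le> (z + 2 * (1 - m)) * (d + 1 - t)"
  proof (cases "e = 0")
    case True
    then have "x = m" "y = 0" unfolding e_def by (simp_all add: add_nonneg_eq_0_iff)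
    then have z_eq: "z = 1 - m" and d_eq: "d = \<bar>m - t\<bar>"
      using \<open>m \<le> 1\<close> unfolding z_def d_def by simp_all
    have "(1 - m) * (3 - m - 2 * t) \<le> (1 - m) * (3 * (\<bar>m - t\<bar> + 1 - t))"
      using \<open>m \<le> 1\<close> by (intro mult_left_mono) (auto simp: abs_if)
    then show ?thesis unfolding z_eq d_eq \<open>e = 0\<close> by (simp add: algebra_simps)
  next
    case False
    moreover have "e \<ge> 0" unfolding e_def by simp
    ultimately have "e > 0" by simp
    txt \<open>The tangent line of d at m, scaled by e, is a lower bound of e * d.\<close>
    have "(z + 2 * (1 - m)) * ((x - t) * (x - m) + y^2) \<le> (z + 2 * (1 - m)) * (d * e)"
      using sqrt_sum_squares_mult_ge[of "x - t" "x - m" y] \<open>m \<le> 1\<close>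
      unfolding z_def d_def e_def by (intro mult_left_mono) auto
    moreover have "e^2 = (x - m)^2 + y^2" unfolding e_def by simp
    then have "(z + 2 * (1 - m)) * ((x - t) * (x - m) + y^2) + e * (z + 2 * (1 - m)) * (1 - t)
        - e * (z + 2 * (1 - t)) * (e + 1 - m) = CR_A1_descent x y m * (t - m)"
      unfolding CR_A1_descent_def z_def[symmetric] e_def[symmetric] by algebra
    ultimately have "e * ((z + 2 * (1 - m)) * (d + 1 - t) - (z + 2 * (1 - t)) * (e + 1 - m)) \<ge> 0"
      using descent by (simp add: algebra_simps)
    then show ?thesis using \<open>e > 0\<close> by (simp add: zero_le_mult_iff)
  qed
  moreover have "Opt x y t = d + 1 - t" "Opt x y m = e + 1 - m"
    using Opt_eq_far_from_T[OF far] assms(2,3) unfolding d_def e_def by auto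
  moreover have "Opt x y t \<ge> 1" "Opt x y m \<ge> 1" unfolding Opt_def by simp_all
  ultimately show ?thesis
    unfolding CR_A1_at_def A1_def z_def[symmetric] by (simp add: divide_simps)
qed

lemma t1_critical:
  fixes x y :: real
  assumes "y \<ge> 0"
  shows "t1 x y \<le> 1 \<and> CR_A1_descent x y (t1 x y) = 0"
proof (cases "x = 1")
  case True
  have offset: "x - t1 x y = 3 * y / 4" using True unfolding t1_def by simp
  have "(3 * y / 4)^2 + y^2 = (5 * y / 4)^2" by (simp add: power2_eq_square)
  then have "sqrt ((3 * y / 4)^2 + y^2) = 5 * y / 4" using assms by simp
  then have "CR_A1_descent x y (t1 x y) = 0"
    unfolding CR_A1_descent_def offset using True assms by (simp add: power2_eq_square)
  moreover have "t1 x y \<le> 1" using offset True assms by simp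
  ultimately show ?thesis by simp
next
  case False
  define a z R w where "a = x - 1" and "z = sqrt (a^2 + y^2)" and "R = sqrt (z * (z + a))"
    and "w = ((z + a) * (2 * a - z) + z * R) / (2 * a)"
  have "a \<noteq> 0" using False unfolding a_def by simp
  have root: "a \<le> w" "z * sqrt (w^2 + y^2) = 2 * y^2 + (2 * a - z) * w"
    using explicit_root_sqrt_equation[OF \<open>a \<noteq> 0\<close>, of y] unfolding z_def R_def w_def by simp_all
  have z2: "z^2 = a^2 + y^2" unfolding z_def by simp
  have "x * (x + z - 2) + y^2 - z + 1 = z * (z + a)"
    using z2 unfolding a_def by (simp add: power2_eq_square algebra_simps)
  then have "t1 x y = (x^2 + y^2 + z * (1 - x) - 1 - z * R) / (2 * a)"
    unfolding t1_def Let_def a_def z_def R_def using False by simp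
  also have "\<dots> = x - w"
    using z2 \<open>a \<noteq> 0\<close> unfolding w_def a_def by (simp add: field_simps power2_eq_square)
  finally have t1_eq: "t1 x y = x - w" .
  have "t1 x y \<le> 1" using root(1) unfolding t1_eq a_def by simp
  moreover have "CR_A1_descent x y (t1 x y) = 0"
    using root(2) unfolding CR_A1_descent_def t1_eq a_def[symmetric] z_def[symmetric] by simp
  ultimately show ?thesis ..
qed

theorem theorem2:
  fixes x y :: real
  assumes "y \<ge> 0"
    and "sqrt ((x - 1)^2 + y^2) \<ge> 1"
  shows "CR_A1 x y = CR_A1_at x y (max (t1 x y) 0)"
proof -
  define m where "m = max (t1 x y) 0"
  have m: "0 \<le> m" "m \<le> 1" using t1_critical[OF assms(1)] unfolding m_def by auto
  have "CR_A1_descent x y m * (t - m) \<ge> 0" if "t \<ge> 0" for t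
  proof (cases "t1 x y > 0")
    case True
    then show ?thesis using t1_critical[OF assms(1)] unfolding m_def by simp
  next
    case False
    have "concave_on {t1 x y..1} (CR_A1_descent x y)"
      using concave_on_CR_A1_descent unfolding concave_on_def by (rule convex_on_subset) auto
    then have "CR_A1_descent x y 0 \<ge> min (CR_A1_descent x y (t1 x y)) (CR_A1_descent x y 1)"
      using False by (intro concave_on_ge_min) auto
    then show ?thesis
      using False that t1_critical[OF assms(1)] CR_A1_descent_1_nonneg[of x y] unfolding m_def by simp
  qed
  then have "CR_A1_at x y t \<le> CR_A1_at x y m" if "t \<in> {0..1}" for t
    using that m by (intro CR_A1_at_le_of_descent[OF assms(2)]) auto
  then have "CR_A1 x y = CR_A1_at x y m"
    unfolding CR_A1_def using m by (intro cSup_eq_maximum) auto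
  then show ?thesis unfolding m_def .
qed

end
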